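(* Consider the prefix code $C_\infty$ for $\mathcal{A}$ in which, for each $s\ge0$, writing $s=2^t-1+r$ with $t\ge0$ and $0\le r\le 2^t-1$, exactly $2^t-1-r$ of the $s+1$ pairs $(i,j)$ with $i+j=s$ receive codewords of length $(t-1)(s+2)+2r+2$ and the remaining $2r+1$ receive codewords of length $(t-1)(s+2)+2r+3$. Then for every $q\in(0,1)$ the expected codeword length of $C_\infty$ under $\mathrm{TDGD}(q)$ is $$\bar L_q(C_\infty)=1+\frac{1}{1-q}\sum_{t\ge0}q^{2^t}\big(2^t(1-q)+2\big).$$
   Context: $\mathcal{A}=\{(i,j):i,j\in\mathbb{Z}_{\ge0}\}$; $\mathrm{TDGD}(q)$ is the distribution $P(i,j)=(1-q)^2q^{i+j}$ on $\mathcal{A}$. *)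

theory Defs
  imports "HOL-Analysis.Analysis" "HOL-Library.Sublist"
begin

definition tdgd :: "real \<Rightarrow> nat \<times> nat \<Rightarrow> real" where
  "tdgd q a = (1 - q)^2 * q ^ (fst a + snd a)"

definition prefix_code :: "('a \<Rightarrow> bool list) \<Rightarrow> bool" where
  "prefix_code C \<longleftrightarrow> (\<forall>a b. a \<noteq> b \<longrightarrow> \<not> prefix (C a) (C b))"

definition short_len :: "nat \<Rightarrow> nat \<Rightarrow> nat \<Rightarrow> int" where
  "short_len t s r = (int t - 1) * (int s + 2) + 2 * int r + 2"

definition Cinf_lengths :: "(nat \<times> nat \<Rightarrow> bool list) \<Rightarrow> bool" where
  "Cinf_lengths C \<longleftrightarrow>
    (\<forall>s t r. s = 2^t - 1 + r \<and> r \<le> 2^t - 1 \<longrightarrow>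
       card {(i, j). i + j = s \<and> int (length (C (i, j))) = short_len t s r} = 2^t - 1 - r \<and>
       card {(i, j). i + j = s \<and> int (length (C (i, j))) = short_len t s r + 1} = 2 * r + 1)"

end

theory Submission
  imports Defs
begin

(* Group the pairs (i,j) by their diagonal s = i + j; all pairs on a diagonal have
   probability (1-q)^2 q^s.  The length profile of C_infinity determines the total
   codeword length on diagonal s: it equals (s+1) + sum_{k : 2^k <= s+1} excess(2^k, s),
   where excess(m, s) = (s+2)(s+1-m)  (lemma diagonal_length_sum).  Weighting by
   (1-q)^2 q^s, the first part sums to 1 (TDGD is a probability distribution), and
   exchanging the order of the double sum over (k, s) turns the second part into
   sum_k 1/(1-q) q^(2^k) (2^k (1-q) + 2), since each column has a closed form obtained
   from the power series of 1/(1-q)^2 and 2/(1-q)^3 (lemma excess_tail_sums).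
   All series are non-negative, so every rearrangement is justified by Tonelli's
   theorem for unordered sums (has_sum). *)

lemma has_sum_Sigma_nonneg:
  fixes f :: "'a \<times> 'b \<Rightarrow> real"
  assumes "\<And>x. x \<in> A \<Longrightarrow> ((\<lambda>y. f (x, y)) has_sum g x) (B x)"
    and "(g has_sum S) A"
    and "\<And>x y. x \<in> A \<Longrightarrow> y \<in> B x \<Longrightarrow> 0 \<le> f (x, y)"
  shows "(f has_sum S) (Sigma A B)"
  using assms by (intro has_sum_SigmaI summable_on_SigmaI) (auto dest: has_sum_imp_summable)

lemma has_sum_by_diagonals:
  fixes f :: "nat \<times> nat \<Rightarrow> real"
  assumes nonneg: "\<And>a. 0 \<le> f a"
    and diagonals: "((\<lambda>s. \<Sum>i\<le>s. f (i, s - i)) has_sum S) UNIV"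
  shows "(f has_sum S) UNIV"
proof -
  have "((\<lambda>(s, i). f (i, s - i)) has_sum S) (SIGMA s:UNIV. {..s})"
    by (rule has_sum_Sigma_nonneg[OF _ diagonals]) (auto simp: nonneg)
  also have "?this \<longleftrightarrow> (f has_sum S) UNIV"
    by (rule has_sum_reindex_bij_witness[where j="\<lambda>(s, i). (i, s - i)" and i="\<lambda>(i, j). (i + j, i)"])
       auto
  finally show ?thesis .
qed

(* Termwise differentiation of the series sum (n+1) z^n = 1/(1-z)^2. *)
lemma second_moment_sums:
  fixes q :: real
  assumes "\<bar>q\<bar> < 1"
  shows "(\<lambda>n. real (Suc n) * real (Suc (Suc n)) * q ^ n) sums (2 / (1 - q) ^ 3)"
proof -
  have "(\<lambda>n. diffs (\<lambda>n. real (Suc n)) n * q ^ n) sums (2 / (1 - q) ^ 3)"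
  proof (rule termdiffs_sums_strong[where K = 1])
    show "(\<lambda>n. real (Suc n) * z ^ n) sums (1 / (1 - z) ^ 2)" if "norm z < 1" for z :: real
      using geometric_deriv_sums[OF that] by simp
    have "1 - q \<noteq> 0" using assms by auto
    then show "((\<lambda>z. 1 / (1 - z) ^ 2) has_field_derivative 2 / (1 - q) ^ 3) (at q)"
      by (auto intro!: derivative_eq_intros simp: divide_simps eval_nat_numeral)
  qed (use assms in auto)
  then show ?thesis
    by (simp add: diffs_def mult_ac)
qed

(* The amount by which diagonal s exceeds the threshold m, weighted by s+2; the extra
   total codeword length on a diagonal is a sum of these terms over m = 2^k. *)
definition excess :: "nat \<Rightarrow> nat \<Rightarrow> real" where
  "excess m s = (if m \<le> s + 1 then real (s + 2) * (real (s + 1) - real m) else 0)"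

lemma excess_nonneg: "0 \<le> excess m s"
  by (simp add: excess_def)

(* Closed form of one column of the double sum: with s = n + m - 1 the summand becomes a
   combination of (n+1)(n+2) q^n, (n+1) q^n and q^n. *)
lemma excess_tail_sums:
  fixes q :: real and m :: nat
  assumes q: "\<bar>q\<bar> < 1" and m: "1 \<le> m"
  shows "(\<lambda>s. (1 - q)^2 * q^s * excess m s) sums (q^m * (real m * (1 - q) + 2) / (1 - q))"
proof -
  obtain k where k: "m = Suc k" using m by (cases m) auto
  define c where "c = (1 - q)^2 * q^k"
  have nq: "norm q < 1" using q by simp
  have "(\<lambda>n. c * (real (Suc n) * real (Suc (Suc n)) * q^n) + c * (real m - 2) * (real (Suc n) * q^n)
            - c * real m * q^n)
        sums (c * (2 / (1 - q)^3) + c * (real m - 2) * (1 / (1 - q)^2) - c * real m * (1 / (1 - q)))"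
    by (intro sums_add sums_diff sums_mult second_moment_sums[OF q] geometric_deriv_sums geometric_sums nq)
  also have "(\<lambda>n. c * (real (Suc n) * real (Suc (Suc n)) * q^n) + c * (real m - 2) * (real (Suc n) * q^n)
            - c * real m * q^n) = (\<lambda>n. (1 - q)^2 * q^(n + k) * excess m (n + k))"
  proof
    fix n
    show "c * (real (Suc n) * real (Suc (Suc n)) * q^n) + c * (real m - 2) * (real (Suc n) * q^n)
            - c * real m * q^n = (1 - q)^2 * q^(n + k) * excess m (n + k)"
      unfolding c_def excess_def k by (simp add: power_add algebra_simps)
  qed
  also have "c * (2 / (1 - q)^3) + c * (real m - 2) * (1 / (1 - q)^2) - c * real m * (1 / (1 - q))
           = q^m * (real m * (1 - q) + 2) / (1 - q)"
  proof -
    have a: "1 - q \<noteq> 0" using q by auto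
    have "(1 - q)^3 = (1 - q)^2 * (1 - q)"
      by (rule power_Suc2[of _ 2, simplified])
    then have "c * (2 / (1 - q)^3) = 2 * q^k / (1 - q)"
      using a unfolding c_def by simp
    moreover have "c * (real m - 2) * (1 / (1 - q)^2) = (real m - 2) * q^k"
      using a unfolding c_def by simp
    moreover have "c * real m * (1 / (1 - q)) = (1 - q) * real m * q^k"
      using a unfolding c_def by (simp add: power2_eq_square)
    moreover have "2 * q^k / (1 - q) + (real m - 2) * q^k - (1 - q) * real m * q^k
                 = q^m * (real m * (1 - q) + 2) / (1 - q)"
      using a unfolding k by (simp add: field_simps)
    ultimately show ?thesis by simp
  qed
  finally show ?thesis
    by (subst (asm) sums_zero_iff_shift) (auto simp: excess_def k)
qed

lemma excess_vanishes:
  assumes "s < k"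
  shows "excess (2 ^ k) s = 0"
proof -
  have "s + 1 < 2 ^ k" using assms less_exp[of k] by linarith
  then show ?thesis by (simp add: excess_def)
qed

(* The series on the right-hand side converges: it is a subseries of the summable series
   q^j (j (1-q) + 2), taken along j = 2^t. *)
lemma dyadic_series_has_sum:
  fixes q :: real
  assumes q: "0 < q" "q < 1"
  shows "((\<lambda>t::nat. q ^ (2 ^ t) * (2 ^ t * (1 - q) + 2)) has_sum
           (\<Sum>t. q ^ (2 ^ t) * (2 ^ t * (1 - q) + 2))) UNIV"
proof -
  define h where "h j = q ^ j * (real j * (1 - q) + 2)" for j :: nat
  have h_nonneg: "0 \<le> h j" for j
    using q unfolding h_def by simp
  have nq: "norm q < 1" using q by simp
  have "summable (\<lambda>j. (1 - q) * (real (Suc j) * q ^ j) + (1 + q) * q ^ j)"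
    by (intro summable_add summable_mult sums_summable[OF geometric_deriv_sums[OF nq]]
        summable_geometric nq)
  also have "(\<lambda>j. (1 - q) * (real (Suc j) * q ^ j) + (1 + q) * q ^ j) = h"
    by (auto simp: h_def algebra_simps)
  finally have "h summable_on range (\<lambda>t::nat. 2 ^ t)"
    by (intro summable_on_subset_banach[OF summable_nonneg_imp_summable_on]) (auto simp: h_nonneg)
  then have "(h \<circ> (\<lambda>t::nat. 2 ^ t)) summable_on UNIV"
    by (subst (asm) summable_on_reindex) (auto simp: inj_on_def)
  then have "summable (\<lambda>t. q ^ (2 ^ t) * (2 ^ t * (1 - q) + 2))"
    by (auto dest: summable_on_imp_summable simp: h_def o_def)
  then show ?thesis
    by (rule sums_nonneg_imp_has_sum[OF summable_sums]) (use q in simp)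
qed

lemma dyadic_excess_has_sum:
  fixes q :: real
  assumes q: "0 < q" "q < 1"
  shows "((\<lambda>s. (1 - q)^2 * q^s * (\<Sum>k\<le>s. excess (2 ^ k) s)) has_sum
           (1 / (1 - q) * (\<Sum>t. q ^ (2 ^ t) * (2 ^ t * (1 - q) + 2)))) UNIV"
proof -
  define H where "H = (\<lambda>(k, s). (1 - q)^2 * q^s * excess (2 ^ k) s)"
  have H_nonneg: "0 \<le> H (k, s)" for k s
    using q by (auto simp: H_def excess_nonneg)
  have rows: "((\<lambda>s. H (k, s)) has_sum (1 / (1 - q) * (q ^ (2 ^ k) * (2 ^ k * (1 - q) + 2)))) UNIV"
    for k
  proof (rule sums_nonneg_imp_has_sum)
    show "(\<lambda>s. H (k, s)) sums (1 / (1 - q) * (q ^ (2 ^ k) * (2 ^ k * (1 - q) + 2)))"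
      using excess_tail_sums[of q "2 ^ k"] q by (simp add: H_def)
  qed (simp add: H_nonneg)
  have "(H has_sum (1 / (1 - q) * (\<Sum>t. q ^ (2 ^ t) * (2 ^ t * (1 - q) + 2)))) (UNIV \<times> UNIV)"
    by (rule has_sum_Sigma_nonneg[OF rows has_sum_cmult_right[OF dyadic_series_has_sum[OF q]]])
       (simp add: H_nonneg)
  then have swapped: "((\<lambda>(s, k). H (k, s)) has_sum
      (1 / (1 - q) * (\<Sum>t. q ^ (2 ^ t) * (2 ^ t * (1 - q) + 2)))) (UNIV \<times> UNIV)"
    by (subst (asm) has_sum_swap)
  have columns: "((\<lambda>k. H (k, s)) has_sum (1 - q)^2 * q^s * (\<Sum>k\<le>s. excess (2 ^ k) s)) UNIV"
    for s
  proof -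
    have "((\<lambda>k. H (k, s)) has_sum (\<Sum>k\<le>s. H (k, s))) {..s}"
      by (rule has_sum_finite) simp
    then have "((\<lambda>k. H (k, s)) has_sum (\<Sum>k\<le>s. H (k, s))) UNIV"
      by (subst (asm) has_sum_cong_neutral[where T = UNIV and g = "\<lambda>k. H (k, s)"])
         (auto simp: H_def excess_vanishes)
    then show ?thesis
      by (simp add: H_def sum_distrib_left)
  qed
  show ?thesis
    by (rule has_sum_Sigma'[OF swapped]) (simp add: columns)
qed

(* The total codeword length on diagonal s = 2^t - 1 + r, read off from the length profile:
   the short and long codewords together cover the s+1 pairs of the diagonal. *)
lemma diagonal_length_count:
  fixes C :: "nat \<times> nat \<Rightarrow> bool list"
  assumes lengths: "Cinf_lengths C" and s: "s = 2 ^ t - 1 + r" and r: "r \<le> 2 ^ t - 1"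
  shows "(\<Sum>i\<le>s. real (length (C (i, s - i))))
           = real (s + 1) * of_int (short_len t s r) + real (2 * r + 1)"
proof -
  define L where "L = short_len t s r"
  define D where "D = {(i, j). i + j = s}"
  define S1 where "S1 = {(i, j). i + j = s \<and> int (length (C (i, j))) = L}"
  define S2 where "S2 = {(i, j). i + j = s \<and> int (length (C (i, j))) = L + 1}"
  have card1: "card S1 = 2 ^ t - 1 - r" and card2: "card S2 = 2 * r + 1"
    using lengths s r unfolding Cinf_lengths_def S1_def S2_def L_def by blast+
  have D_image: "D = (\<lambda>i. (i, s - i)) ` {..s}"
    unfolding D_def by (auto simp: image_iff)
  have inj: "inj_on (\<lambda>i. (i, s - i)) {..s}"
    by (auto intro: inj_onI)
  have finD: "finite D" and cardD: "card D = s + 1"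
    unfolding D_image using card_image[OF inj] by simp_all
  have sub: "S1 \<union> S2 \<subseteq> D" and disj: "S1 \<inter> S2 = {}"
    unfolding S1_def S2_def D_def by auto
  have fin1: "finite S1" and fin2: "finite S2"
    using sub finD finite_subset by blast+
  have "(1::nat) \<le> 2 ^ t" by simp
  with r have "Suc r \<le> 2 ^ t" by linarith
  then have card_sum: "card S1 + card S2 = s + 1"
    unfolding card1 card2 using s r by linarith
  then have "card (S1 \<union> S2) = card D"
    using card_Un_disjoint[OF fin1 fin2 disj] cardD by simp
  then have cover: "S1 \<union> S2 = D"
    using card_subset_eq[OF finD sub] by simp
  have "(\<Sum>i\<le>s. real (length (C (i, s - i)))) = (\<Sum>p\<in>D. real (length (C p)))"
    unfolding D_image by (simp add: sum.reindex[OF inj])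
  also have "\<dots> = (\<Sum>p\<in>S1. real (length (C p))) + (\<Sum>p\<in>S2. real (length (C p)))"
    unfolding cover[symmetric] by (rule sum.union_disjoint[OF fin1 fin2 disj])
  also have "\<dots> = (\<Sum>p\<in>S1. of_int L) + (\<Sum>p\<in>S2. of_int L + 1)"
  proof (intro arg_cong2[where f = "(+)"] sum.cong refl)
    show "real (length (C p)) = of_int L" if "p \<in> S1" for p
    proof -
      have "int (length (C p)) = L" using that unfolding S1_def by auto
      from this[symmetric] show ?thesis by simp
    qed
    show "real (length (C p)) = of_int L + 1" if "p \<in> S2" for p
    proof -
      have "int (length (C p)) = L + 1" using that unfolding S2_def by auto
      from this[symmetric] show ?thesis by simp
    qed
  qed
  also have "\<dots> = real (card S1 + card S2) * of_int L + real (card S2)"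
    by (simp add: algebra_simps)
  also have "\<dots> = real (s + 1) * of_int L + real (2 * r + 1)"
    by (subst card_sum) (simp only: card2)
  finally show ?thesis
    unfolding L_def .
qed

(* For 2^t <= s+1 < 2^(t+1) exactly the thresholds 2^0, ..., 2^t contribute. *)
lemma dyadic_excess_sum:
  assumes lower: "2 ^ t \<le> s + 1" and upper: "s + 1 < 2 ^ (t + 1)"
  shows "(\<Sum>k\<le>s. excess (2 ^ k) s) = real (s + 2) * (real (t + 1) * real (s + 1) - (2 ^ (t + 1) - 1))"
proof -
  have "t < 2 ^ t" by (rule less_exp)
  with lower have "t \<le> s" by linarith
  then have "(\<Sum>k\<le>s. excess (2 ^ k) s) = (\<Sum>k\<le>t. excess (2 ^ k) s)"
  proof (intro sum.mono_neutral_right ballI)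
    fix k assume "k \<in> {..s} - {..t}"
    then have "(2::nat) ^ (t + 1) \<le> 2 ^ k" by (intro power_increasing) auto
    with upper show "excess (2 ^ k) s = 0" by (simp add: excess_def)
  qed auto
  also have "\<dots> = (\<Sum>k\<le>t. real (s + 2) * (real (s + 1) - 2 ^ k))"
  proof (rule sum.cong[OF refl])
    fix k assume "k \<in> {..t}"
    then have "(2::nat) ^ k \<le> 2 ^ t" by (intro power_increasing) auto
    with lower have "2 ^ k \<le> s + 1" by linarith
    then show "excess (2 ^ k) s = real (s + 2) * (real (s + 1) - 2 ^ k)"
      by (simp add: excess_def)
  qed
  also have "(\<Sum>k\<le>t. (2::real) ^ k) = 2 ^ (t + 1) - 1"
    by (induction t) simp_all
  then have "(\<Sum>k\<le>t. real (s + 2) * (real (s + 1) - 2 ^ k))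
      = real (s + 2) * (real (t + 1) * real (s + 1) - (2 ^ (t + 1) - 1))"
    by (simp add: sum_distrib_left[symmetric] sum_subtractf)
  finally show ?thesis .
qed

(* The total codeword length on diagonal s in a form independent of t and r. *)
lemma diagonal_length_sum:
  fixes C :: "nat \<times> nat \<Rightarrow> bool list"
  assumes "Cinf_lengths C"
  shows "(\<Sum>i\<le>s. real (length (C (i, s - i)))) = real (s + 1) + (\<Sum>k\<le>s. excess (2 ^ k) s)"
proof -
  obtain t where lower: "2 ^ t \<le> s + 1" and upper: "s + 1 < 2 ^ (t + 1)"
    using ex_power_ivl1[of 2 "s + 1"] by auto
  define r where "r = s + 1 - 2 ^ t"
  have s: "s = 2 ^ t - 1 + r" and r: "r \<le> 2 ^ t - 1"
    using lower upper unfolding r_def by simp_all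
  have r_real: "real r = real s + 1 - 2 ^ t"
    using lower unfolding r_def by (simp add: of_nat_diff)
  show ?thesis
    unfolding diagonal_length_count[OF assms s r] dyadic_excess_sum[OF lower upper]
    by (simp add: short_len_def r_real algebra_simps)
qed

lemma tdgd_diagonal_mass:
  fixes q :: real
  assumes "0 < q" "q < 1"
  shows "((\<lambda>s. (1 - q)^2 * q^s * real (s + 1)) has_sum 1) UNIV"
proof (rule sums_nonneg_imp_has_sum)
  have "norm q < 1" using assms by simp
  from sums_mult[OF geometric_deriv_sums[OF this], of "(1 - q)^2"]
  show "(\<lambda>s. (1 - q)^2 * q^s * real (s + 1)) sums 1"
    using assms by (simp add: mult_ac)
qed (use assms in simp)

theorem corollary5:
  fixes C :: "nat \<times> nat \<Rightarrow> bool list" and q :: real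
  assumes "prefix_code C"
    and "Cinf_lengths C"
    and "0 < q" and "q < 1"
  shows "((\<lambda>a. tdgd q a * real (length (C a))) has_sum
          (1 + 1 / (1 - q) * (\<Sum>t. q ^ (2 ^ t) * (2 ^ t * (1 - q) + 2)))) UNIV"
proof (rule has_sum_by_diagonals)
  have q: "0 < q" "q < 1" using assms(3,4) .
  have diagonal: "(\<Sum>i\<le>s. tdgd q (i, s - i) * real (length (C (i, s - i))))
      = (1 - q)^2 * q^s * real (s + 1) + (1 - q)^2 * q^s * (\<Sum>k\<le>s. excess (2 ^ k) s)" for s
    by (simp add: tdgd_def sum_distrib_left[symmetric] diagonal_length_sum[OF assms(2)] algebra_simps)
  show "((\<lambda>s. \<Sum>i\<le>s. tdgd q (i, s - i) * real (length (C (i, s - i)))) has_sum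
          (1 + 1 / (1 - q) * (\<Sum>t. q ^ (2 ^ t) * (2 ^ t * (1 - q) + 2)))) UNIV"
    unfolding diagonal by (intro has_sum_add tdgd_diagonal_mass dyadic_excess_has_sum q)
qed (use assms(3,4) in \<open>simp add: tdgd_def\<close>)

end
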